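(* Fix integers $m,n\ge1$, a time index $t$ with scale factor $\alpha_t\in(0,1)$ and $\upsilon_t=1-\alpha_t$. Let $p^\lambda_t$ and $p_t(\cdot\mid x^\star_1),\dots,p_t(\cdot\mid x^\star_n)$ be positive, twice continuously differentiable probability densities on $\mathbb{R}^m$ (the diffused prior and the diffused single-observation posteriors). For $k\in\{\lambda,1,\dots,n\}$ write $g_k(\theta)=\nabla_\theta\log p^\lambda_t(\theta)$ if $k=\lambda$ and $g_k(\theta)=\nabla_\theta\log p_t(\theta\mid x^\star_k)$ otherwise, and define $$\boldsymbol{\mu}_{t,k}(\theta)=\frac{1}{\sqrt{\alpha_t}}\left(\theta+\upsilon_t\, g_k(\theta)\right),\qquad \Sigma_{t,k}(\theta)=\frac{\upsilon_t}{\sqrt{\alpha_t}}\nabla_\theta\boldsymbol{\mu}_{t,k}(\theta).$$ Assume that each $\Sigma_{t,k}(\theta)$ is symmetric positive definite and that $\Lambda(\theta)=\sum_{j=1}^{n}\Sigma_{t,j}(\theta)^{-1}+(1-n)\Sigma_{t,\lambda}(\theta)^{-1}$ is positive definite for all $\theta$. Define $$\log\hat L_\lambda(\theta)=\log\int_{\mathbb{R}^m}\mathcal{N}\big(\theta_0;\boldsymbol{\mu}_{t,\lambda}(\theta),\Sigma_{t,\lambda}(\theta)\big)^{1-n}\prod_{j=1}^{n}\mathcal{N}\big(\theta_0;\boldsymbol{\mu}_{t,j}(\theta),\Sigma_{t,j}(\theta)\big)\,\mathrm{d}\theta_0$$ and the approximate tall-data posterior score $$\hat s(\theta)=(1-n)\nabla_\theta\log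 p^\lambda_t(\theta)+\sum_{j=1}^{n}\nabla_\theta\log p_t(\theta\mid x^\star_j)+\nabla_\theta\log\hat L_\lambda(\theta).$$ If $\nabla_\theta\Sigma_{t,j}(\theta)=0$ for all $1\le j\le n$ and $\nabla_\theta\Sigma_{t,\lambda}(\theta)=0$ (i.e. all these covariance matrices are constant in $\theta$), then for all $\theta\in\mathbb{R}^m$ $$\hat s(\theta)=\Lambda(\theta)^{-1}\left(\sum_{j=1}^{n}\Sigma_{t,j}(\theta)^{-1}\nabla_\theta\log p_t(\theta\mid x^\star_j)+(1-n)\Sigma_{t,\lambda}(\theta)^{-1}\nabla_\theta\log p^\lambda_t(\theta)\right).$$
   Context: $\mathcal{N}(\theta;\boldsymbol{\mu},\Sigma)$ denotes the multivariate Gaussian density with mean $\boldsymbol{\mu}$ and covariance $\Sigma$. The forward (noising) kernel is $q_{t|0}(\theta_t\mid\theta_0)=\mathcal{N}(\theta_t;\sqrt{\alpha_t}\theta_0,\upsilon_t\mathbf{I}_m)$; the quantities $\boldsymbol{\mu}_{t,k}$ and $\Sigma_{t,k}$ are the (Tweedie) mean and covariance of the Gaussian approximation of the corresponding backward kernel $p_{0|t}(\theta_0\mid\theta_t)$, and $\hat s$ approximates the score $\nabla_{\theta_t}\log p_t(\theta_t\mid x^\star_{1:n})$ of the diffused tall-data posterior. *)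

theory Defs
  imports "HOL-Analysis.Analysis"
begin

definition grad :: "(real^'m \<Rightarrow> real) \<Rightarrow> real^'m \<Rightarrow> real^'m" where
  "grad f x = (\<chi> i. frechet_derivative f (at x) (axis i 1))"

definition C2 :: "(real^'m \<Rightarrow> real) \<Rightarrow> bool" where
  "C2 f \<longleftrightarrow> (\<exists>f' f''. (\<forall>x. (f has_derivative blinfun_apply (f' x)) (at x)) \<and>
                      (\<forall>x. (f' has_derivative blinfun_apply (f'' x)) (at x)) \<and>
                      continuous_on UNIV f'')"

definition prob_density :: "(real^'m \<Rightarrow> real) \<Rightarrow> bool" where
  "prob_density p \<longleftrightarrow> (\<forall>x. 0 \<le> p x) \<and> has_bochner_integral lborel p 1"

definition pos_def :: "real^'m^'m \<Rightarrow> bool" where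
  "pos_def A \<longleftrightarrow> (\<forall>x. x \<noteq> 0 \<longrightarrow> 0 < x \<bullet> (A *v x))"

definition sym_pos_def :: "real^'m^'m \<Rightarrow> bool" where
  "sym_pos_def A \<longleftrightarrow> transpose A = A \<and> pos_def A"

definition gauss :: "real^'m \<Rightarrow> real^'m \<Rightarrow> real^'m^'m \<Rightarrow> real" where
  "gauss x mu S = exp (- (1/2) * ((x - mu) \<bullet> (matrix_inv S *v (x - mu))))
                   / sqrt ((2 * pi) ^ CARD('m) * det S)"

definition tw_mean :: "real \<Rightarrow> (real^'m \<Rightarrow> real) \<Rightarrow> real^'m \<Rightarrow> real^'m" where
  "tw_mean \<alpha> q \<theta> = (1 / sqrt \<alpha>) *\<^sub>R (\<theta> + (1 - \<alpha>) *\<^sub>R grad (\<lambda>u. ln (q u)) \<theta>)"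

definition tw_cov :: "real \<Rightarrow> (real^'m \<Rightarrow> real) \<Rightarrow> real^'m \<Rightarrow> real^'m^'m" where
  "tw_cov \<alpha> q \<theta> = ((1 - \<alpha>) / sqrt \<alpha>) *\<^sub>R jacobian (tw_mean \<alpha> q) (at \<theta>)"

definition Lam :: "real \<Rightarrow> (real^'m \<Rightarrow> real) \<Rightarrow> (nat \<Rightarrow> real^'m \<Rightarrow> real) \<Rightarrow> nat \<Rightarrow> real^'m \<Rightarrow> real^'m^'m" where
  "Lam \<alpha> pl p n \<theta> = (\<Sum>j\<in>{1..n}. matrix_inv (tw_cov \<alpha> (p j) \<theta>))
                      + (1 - real n) *\<^sub>R matrix_inv (tw_cov \<alpha> pl \<theta>)"

definition Lhat :: "real \<Rightarrow> (real^'m \<Rightarrow> real) \<Rightarrow> (nat \<Rightarrow> real^'m \<Rightarrow> real) \<Rightarrow> nat \<Rightarrow> real^'m \<Rightarrow> real" where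
  "Lhat \<alpha> pl p n \<theta> = (LINT \<theta>0|lborel.
      gauss \<theta>0 (tw_mean \<alpha> pl \<theta>) (tw_cov \<alpha> pl \<theta>) powr (1 - real n)
      * (\<Prod>j\<in>{1..n}. gauss \<theta>0 (tw_mean \<alpha> (p j) \<theta>) (tw_cov \<alpha> (p j) \<theta>)))"

definition shat :: "real \<Rightarrow> (real^'m \<Rightarrow> real) \<Rightarrow> (nat \<Rightarrow> real^'m \<Rightarrow> real) \<Rightarrow> nat \<Rightarrow> real^'m \<Rightarrow> real^'m" where
  "shat \<alpha> pl p n \<theta> = (1 - real n) *\<^sub>R grad (\<lambda>u. ln (pl u)) \<theta>
      + (\<Sum>j\<in>{1..n}. grad (\<lambda>u. ln (p j u)) \<theta>)
      + grad (\<lambda>u. ln (Lhat \<alpha> pl p n u)) \<theta>"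

end

theory Submission
  imports Defs "HOL-Probability.Distributions"
begin

(* Write the prior as the term k = 0 with weight 1 - n and the observations as k = 1..n with
   weight 1; the weights sum to one.  Completing the square in theta0 turns the integrand of
   L_hat into exp (- c/2) times a translated Gaussian kernel with precision
   Lam = sum_k w_k S_k^-1, where c = sum_k w_k mu_k' S_k^-1 mu_k - b' Lam^-1 b and
   b = sum_k w_k S_k^-1 mu_k.  With constant covariances the integral of that kernel does not
   depend on theta, so ln L_hat = const - c/2; moreover the Tweedie mean mu_k then has the
   constant Jacobian (sqrt alpha / (1 - alpha)) S_k, which S_k^-1 cancels in the gradient of c.
   Substituting mu_k = (theta + (1 - alpha) g_k) / sqrt alpha gives
   grad ln L_hat = Lam^-1 (sum_k w_k S_k^-1 g_k) - sum_k w_k g_k, whose last sum cancels the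
   remaining terms of s_hat. *)

section \<open>Positive definite matrices\<close>

lemma symmetric_matrix_inner:
  fixes A :: "real^'m^'m"
  assumes "transpose A = A"
  shows "x \<bullet> (A *v y) = (A *v x) \<bullet> y"
  by (metis assms dot_lmul_matrix transpose_matrix_vector)

lemma pos_def_invertible:
  fixes A :: "real^'m^'m"
  assumes "pos_def A"
  shows "invertible A"
proof -
  have "inj ((*v) A)"
  proof (rule injI)
    fix x y assume "A *v x = A *v y"
    then have "A *v (x - y) = 0" by (simp add: matrix_vector_mult_diff_distrib)
    then show "x = y" using assms unfolding pos_def_def
      by (metis inner_zero_right less_irrefl right_minus_eq)
  qed
  then show ?thesis
    using det_nz_iff_inj[OF matrix_vector_mul_linear, of A]
    by (simp add: invertible_det_nz)
qed

lemma
  fixes A :: "'a::semiring_1^'n^'m"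
  assumes "invertible A"
  shows matrix_inv_right: "A ** matrix_inv A = mat 1"
    and matrix_inv_left: "matrix_inv A ** A = mat 1"
proof -
  have "\<exists>A'. A ** A' = mat 1 \<and> A' ** A = mat 1" using assms by (simp add: invertible_def)
  then have "A ** matrix_inv A = mat 1 \<and> matrix_inv A ** A = mat 1"
    unfolding matrix_inv_def by (rule someI_ex)
  then show "A ** matrix_inv A = mat 1" "matrix_inv A ** A = mat 1" by auto
qed

lemma transpose_matrix_inv_symmetric:
  fixes A :: "real^'m^'m"
  assumes "invertible A" "transpose A = A"
  shows "transpose (matrix_inv A) = matrix_inv A"
proof -
  let ?B = "matrix_inv A"
  have "A ** transpose ?B = mat 1"
    using arg_cong[OF matrix_inv_left[OF assms(1)], of transpose] assms(2)
    by (simp add: matrix_transpose_mul)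
  then have "?B = ?B ** (A ** transpose ?B)" by simp
  also have "\<dots> = (?B ** A) ** transpose ?B" by (simp add: matrix_mul_assoc)
  finally show ?thesis using matrix_inv_left[OF assms(1)] by simp
qed

lemma pos_def_det_pos:
  fixes A :: "real^'m^'m"
  assumes "pos_def A"
  shows "0 < det A"
proof (rule ccontr)
  assume "\<not> 0 < det A"
  define B where "B t = (1 - t) *\<^sub>R mat 1 + t *\<^sub>R A" for t :: real
  have "continuous_on {0..1} (\<lambda>t. det (B t))"
    unfolding det_def B_def by (intro continuous_intros)
  moreover have "det (B 1) \<le> 0" "0 \<le> det (B 0)"
    using \<open>\<not> 0 < det A\<close> by (simp_all add: B_def)
  ultimately obtain t where t: "0 \<le> t" "t \<le> 1" "det (B t) = 0"
    using IVT2' by (metis zero_le_one)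
  \<comment> \<open>the determinant cannot vanish on the segment from the identity to \<open>A\<close>\<close>
  have "pos_def (B t)"
    unfolding pos_def_def
  proof (intro allI impI)
    fix x :: "real^'m" assume "x \<noteq> 0"
    then have "0 < x \<bullet> x" "0 < x \<bullet> (A *v x)" using assms by (simp_all add: pos_def_def)
    moreover have "x \<bullet> (B t *v x) = (1 - t) * (x \<bullet> x) + t * (x \<bullet> (A *v x))"
      by (simp add: B_def algebra_simps scaleR_matrix_vector_assoc[symmetric])
    ultimately show "0 < x \<bullet> (B t *v x)"
      using t by (cases "t = 0") (simp_all add: add_nonneg_pos)
  qed
  then show False using t pos_def_invertible invertible_det_nz by blast
qed

lemma pos_def_coercive:
  fixes A :: "real^'m^'m"
  assumes "pos_def A"
  obtains c where "0 < c" "\<And>x. c * (norm x)\<^sup>2 \<le> x \<bullet> (A *v x)"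
proof -
  let ?f = "\<lambda>x::real^'m. x \<bullet> (A *v x)"
  have "continuous_on (sphere 0 1) ?f"
    by (intro continuous_intros linear_continuous_on) auto
  moreover have "axis i 1 \<in> sphere (0::real^'m) 1" for i by simp
  then have "sphere (0::real^'m) 1 \<noteq> {}" by blast
  ultimately obtain u where u: "u \<in> sphere 0 1" "\<And>y. y \<in> sphere 0 1 \<Longrightarrow> ?f u \<le> ?f y"
    using continuous_attains_inf[OF compact_sphere] by blast
  have "u \<noteq> 0" using u(1) by auto
  then have "0 < ?f u" using assms by (simp add: pos_def_def)
  moreover have "?f u * (norm x)\<^sup>2 \<le> ?f x" for x
  proof (cases "x = 0")
    case False
    define y where "y = (1 / norm x) *\<^sub>R x"
    have "y \<in> sphere 0 1" using False by (simp add: y_def)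
    moreover have "?f x = (norm x)\<^sup>2 * ?f y"
      using False by (simp add: y_def matrix_vector_mult_scaleR power2_eq_square)
    ultimately show ?thesis
      using u(2) by (metis mult.commute mult_right_mono zero_le_power2)
  qed simp
  ultimately show ?thesis using that by blast
qed

lemma transpose_sum_scaleR:
  fixes A :: "'k \<Rightarrow> real^'n^'m"
  shows "transpose (\<Sum>k\<in>I. w k *\<^sub>R A k) = (\<Sum>k\<in>I. w k *\<^sub>R transpose (A k))"
  by (induction I rule: infinite_finite_induct)
    (simp_all add: transpose_def vec_eq_iff sum_distrib_left)

lemma matrix_vector_mult_sum_left:
  fixes A :: "'k \<Rightarrow> real^'n^'m"
  shows "(\<Sum>k\<in>I. A k) *v x = (\<Sum>k\<in>I. A k *v x)"
  by (induction I rule: infinite_finite_induct)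
    (simp_all add: matrix_vector_mult_add_rdistrib)

lemma sym_pos_def_matrix_inv:
  fixes S :: "real^'m^'m"
  assumes "sym_pos_def S"
  shows "transpose (matrix_inv S) = matrix_inv S"
    and "S ** matrix_inv S = mat 1" and "matrix_inv S ** S = mat 1"
  using assms pos_def_invertible transpose_matrix_inv_symmetric matrix_inv_right matrix_inv_left
  by (auto simp: sym_pos_def_def)

section \<open>Gaussian integrals\<close>

lemma integrable_exp_neg_norm_sq:
  fixes c :: real
  assumes "0 < c"
  shows "integrable lborel (\<lambda>x::'a::euclidean_space. exp (- c * (norm x)\<^sup>2))"
proof -
  define s where "s = 1 / sqrt (2 * c)"
  have s: "0 < s" "2 * s\<^sup>2 = 1 / c" using assms by (simp_all add: s_def power_divide)
  define K where "K = (1 / sqrt (2 * pi * s\<^sup>2)) ^ DIM('a)"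
  \<comment> \<open>the integrand is a multiple of a product of one-dimensional normal densities\<close>
  have prod_normal: "(\<Prod>b\<in>Basis. normal_density 0 s (x \<bullet> b)) = K * exp (- c * (norm x)\<^sup>2)"
    for x :: 'a
  proof -
    have "(\<Prod>b\<in>Basis. normal_density 0 s (x \<bullet> b))
        = (\<Prod>b\<in>(Basis::'a set). (1 / sqrt (2 * pi * s\<^sup>2)) * exp (- c * (x \<bullet> b)\<^sup>2))"
      using s(2) by (intro prod.cong) (simp_all add: normal_density_def)
    also have "\<dots> = K * (\<Prod>b\<in>(Basis::'a set). exp (- c * (x \<bullet> b)\<^sup>2))"
      by (simp only: prod.distrib K_def prod_constant)
    also have "\<dots> = K * exp (\<Sum>b\<in>Basis. - c * (x \<bullet> b)\<^sup>2)"
      by (simp add: exp_sum)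
    also have "(\<Sum>b\<in>Basis. - c * (x \<bullet> b)\<^sup>2) = - c * (norm x)\<^sup>2"
      unfolding power2_norm_eq_inner euclidean_inner[of x x]
      by (simp add: power2_eq_square sum_distrib_left)
    finally show ?thesis .
  qed
  have "(\<integral>\<^sup>+x. (\<Prod>b\<in>(Basis::'a set). normal_density 0 s (x \<bullet> b)) \<partial>lborel)
      = (\<integral>\<^sup>+x. (\<Prod>b\<in>(Basis::'a set). ennreal (normal_density 0 s (x \<bullet> b))) \<partial>lborel)"
    by (simp add: prod_ennreal)
  also have "\<dots> = (\<Prod>b\<in>(Basis::'a set). (\<integral>\<^sup>+x. ennreal (normal_density 0 s x) \<partial>lborel))"
    by (rule nn_integral_lborel_prod) auto
  also have "(\<integral>\<^sup>+x. ennreal (normal_density 0 s x) \<partial>lborel) = 1"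
    using s(1) by (subst nn_integral_eq_integral) auto
  finally have "integrable lborel (\<lambda>x::'a. \<Prod>b\<in>Basis. normal_density 0 s (x \<bullet> b))"
    by (intro integrableI_nonneg) (simp_all add: prod_nonneg)
  then have "integrable lborel (\<lambda>x::'a. (1 / K) * (\<Prod>b\<in>Basis. normal_density 0 s (x \<bullet> b)))"
    by simp
  moreover have "0 < K" using s(1) by (simp add: K_def)
  ultimately show ?thesis by (simp add: prod_normal)
qed

lemma borel_measurable_exp_quadratic_form:
  "(\<lambda>x. exp (- (1/2) * (x \<bullet> ((A::real^'m^'m) *v x)))) \<in> borel_measurable borel"
  by (intro borel_measurable_continuous_onI continuous_intros linear_continuous_on) auto

lemma integrable_exp_quadratic_form:
  fixes A :: "real^'m^'m"
  assumes "pos_def A"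
  shows "integrable lborel (\<lambda>x. exp (- (1/2) * (x \<bullet> (A *v x))))"
proof -
  obtain c where "0 < c" "\<And>x. c * (norm x)\<^sup>2 \<le> x \<bullet> (A *v x)"
    using pos_def_coercive[OF assms] by blast
  then show ?thesis
    using borel_measurable_exp_quadratic_form[of A]
    by (intro Bochner_Integration.integrable_bound[OF integrable_exp_neg_norm_sq[of "c/2"]]) auto
qed

lemma integral_exp_quadratic_form_pos:
  fixes A :: "real^'m^'m"
  assumes "pos_def A"
  shows "0 < (LINT x|lborel. exp (- (1/2) * (x \<bullet> (A *v x))))"
proof -
  have "(LINT x|lborel. exp (- (1/2) * (x \<bullet> (A *v x)))) \<noteq> 0"
  proof
    assume "(LINT x|lborel. exp (- (1/2) * (x \<bullet> (A *v x)))) = 0"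
    then have "AE x in lborel. exp (- (1/2) * ((x::real^'m) \<bullet> (A *v x))) = 0"
      using integral_nonneg_eq_0_iff_AE[OF integrable_exp_quadratic_form[OF assms]] by auto
    then show False by (simp add: ae_filter_eq_bot_iff trivial_limit_def[symmetric])
  qed
  moreover have "0 \<le> (LINT x|lborel. exp (- (1/2) * (x \<bullet> (A *v x))))"
    by (rule integral_nonneg_AE) auto
  ultimately show ?thesis by linarith
qed

lemma lborel_integral_translate:
  fixes f :: "'a::euclidean_space \<Rightarrow> 'b::{banach, second_countable_topology}"
  assumes "f \<in> borel_measurable borel"
  shows "(LINT x|lborel. f (x - m)) = (LINT x|lborel. f x)"
proof -
  have "(LINT x|lborel. f x) = integral\<^sup>L (distr lborel borel ((+) (-m))) f"
    by (simp add: lborel_distr_plus)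
  also have "\<dots> = (LINT x|lborel. f (-m + x))"
    by (rule integral_distr) (auto simp: assms)
  finally show ?thesis by simp
qed

section \<open>Products of Gaussian powers\<close>

lemma gauss_pos:
  assumes "0 < det S"
  shows "0 < gauss x \<mu> S"
  using assms by (simp add: gauss_def)

lemma prod_gauss_powr:
  fixes S :: "'k \<Rightarrow> real^'m^'m"
  assumes "finite I" "\<And>k. k \<in> I \<Longrightarrow> 0 < det (S k)"
  shows "(\<Prod>k\<in>I. gauss x (\<mu> k) (S k) powr w k)
       = (\<Prod>k\<in>I. sqrt ((2 * pi) ^ CARD('m) * det (S k)) powr (- w k))
         * exp (- (1/2) * (\<Sum>k\<in>I. w k * ((x - \<mu> k) \<bullet> (matrix_inv (S k) *v (x - \<mu> k)))))"
proof -
  have "gauss x (\<mu> k) (S k) powr w k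
      = sqrt ((2 * pi) ^ CARD('m) * det (S k)) powr (- w k)
        * exp (- (1/2) * (w k * ((x - \<mu> k) \<bullet> (matrix_inv (S k) *v (x - \<mu> k)))))"
    if "k \<in> I" for k
    using assms(2)[OF that]
    by (simp add: gauss_def powr_def ln_div algebra_simps flip: exp_add)
  then show ?thesis
    using assms(1) by (simp add: prod.distrib exp_sum sum_distrib_left)
qed

lemma weighted_quadratic_forms_complete_square:
  fixes I :: "'k set" and w :: "'k \<Rightarrow> real" and P :: "'k \<Rightarrow> real^'m^'m" and m :: "'k \<Rightarrow> real^'m"
  defines "\<Lambda> \<equiv> \<Sum>k\<in>I. w k *\<^sub>R P k"
    and "b \<equiv> \<Sum>k\<in>I. w k *\<^sub>R (P k *v m k)"
  assumes "\<And>k. k \<in> I \<Longrightarrow> transpose (P k) = P k" and "\<Lambda> ** M = mat 1"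
  shows "(\<Sum>k\<in>I. w k * ((x - m k) \<bullet> (P k *v (x - m k))))
       = (x - M *v b) \<bullet> (\<Lambda> *v (x - M *v b))
         + ((\<Sum>k\<in>I. w k * (m k \<bullet> (P k *v m k))) - b \<bullet> (M *v b))"
proof -
  have "(x - m k) \<bullet> (P k *v (x - m k))
      = x \<bullet> (P k *v x) - 2 * (x \<bullet> (P k *v m k)) + m k \<bullet> (P k *v m k)" if "k \<in> I" for k
    using symmetric_matrix_inner[OF assms(3)[OF that], of "m k" x]
    by (simp add: matrix_vector_mult_diff_distrib inner_diff_left inner_diff_right inner_commute)
  then have "(\<Sum>k\<in>I. w k * ((x - m k) \<bullet> (P k *v (x - m k))))
      = (\<Sum>k\<in>I. w k * (x \<bullet> (P k *v x))) - 2 * (\<Sum>k\<in>I. w k * (x \<bullet> (P k *v m k)))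
        + (\<Sum>k\<in>I. w k * (m k \<bullet> (P k *v m k)))"
    by (simp add: algebra_simps sum.distrib sum_subtractf sum_distrib_left cong: sum.cong)
  also have "(\<Sum>k\<in>I. w k * (x \<bullet> (P k *v x))) = x \<bullet> (\<Lambda> *v x)"
    by (simp add: \<Lambda>_def matrix_vector_mult_sum_left inner_sum_right
        scaleR_matrix_vector_assoc[symmetric])
  also have "(\<Sum>k\<in>I. w k * (x \<bullet> (P k *v m k))) = x \<bullet> b"
    by (simp add: b_def inner_sum_right)
  moreover have "\<Lambda> *v (M *v b) = b"
    by (simp add: matrix_vector_mul_assoc assms(4))
  moreover have "transpose \<Lambda> = \<Lambda>"
    using assms(3) by (simp add: \<Lambda>_def transpose_sum_scaleR cong: sum.cong)
  ultimately show ?thesis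
    using symmetric_matrix_inner[of \<Lambda> "M *v b" x]
    by (simp add: matrix_vector_mult_diff_distrib inner_diff_left inner_diff_right inner_commute)
qed

(* Canonical form of the product of the N(x; m k, S k) powr w k: up to a constant factor it is
   exp (- ((x - z)' Lam (x - z) + residual) / 2) with precision Lam and z = Lam^-1 info. *)
definition gauss_prod_precision :: "'k set \<Rightarrow> ('k \<Rightarrow> real) \<Rightarrow> ('k \<Rightarrow> real^'m^'m) \<Rightarrow> real^'m^'m"
  where "gauss_prod_precision I w S = (\<Sum>k\<in>I. w k *\<^sub>R matrix_inv (S k))"

definition gauss_prod_info ::
    "'k set \<Rightarrow> ('k \<Rightarrow> real) \<Rightarrow> ('k \<Rightarrow> real^'m^'m) \<Rightarrow> ('k \<Rightarrow> real^'m) \<Rightarrow> real^'m"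
  where "gauss_prod_info I w S m = (\<Sum>k\<in>I. w k *\<^sub>R (matrix_inv (S k) *v m k))"

definition gauss_prod_residual ::
    "'k set \<Rightarrow> ('k \<Rightarrow> real) \<Rightarrow> ('k \<Rightarrow> real^'m^'m) \<Rightarrow> ('k \<Rightarrow> real^'m) \<Rightarrow> real"
  where "gauss_prod_residual I w S m =
    (\<Sum>k\<in>I. w k * (m k \<bullet> (matrix_inv (S k) *v m k)))
    - gauss_prod_info I w S m \<bullet> (matrix_inv (gauss_prod_precision I w S) *v gauss_prod_info I w S m)"

lemma prod_gauss_powr_canonical:
  fixes I :: "'k set" and w :: "'k \<Rightarrow> real" and S :: "'k \<Rightarrow> real^'m^'m" and m :: "'k \<Rightarrow> real^'m"
  defines "\<Lambda> \<equiv> gauss_prod_precision I w S"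
  defines "z \<equiv> matrix_inv \<Lambda> *v gauss_prod_info I w S m"
  assumes "finite I" and "\<And>k. k \<in> I \<Longrightarrow> sym_pos_def (S k)" and "invertible \<Lambda>"
  shows "(\<Prod>k\<in>I. gauss x (m k) (S k) powr w k)
       = (\<Prod>k\<in>I. sqrt ((2 * pi) ^ CARD('m) * det (S k)) powr (- w k))
         * exp (- (1/2) * gauss_prod_residual I w S m) * exp (- (1/2) * ((x - z) \<bullet> (\<Lambda> *v (x - z))))"
proof -
  define P where "P k = matrix_inv (S k)" for k
  have det_pos: "0 < det (S k)" and P_sym: "transpose (P k) = P k" if "k \<in> I" for k
    using assms(4)[OF that] pos_def_det_pos sym_pos_def_matrix_inv(1)
    by (auto simp: sym_pos_def_def P_def)
  have "(\<Sum>k\<in>I. w k *\<^sub>R P k) ** matrix_inv \<Lambda> = mat 1"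
    using matrix_inv_right[OF assms(5)] by (simp add: \<Lambda>_def gauss_prod_precision_def P_def)
  then have "(\<Sum>k\<in>I. w k * ((x - m k) \<bullet> (P k *v (x - m k))))
      = (x - z) \<bullet> (\<Lambda> *v (x - z)) + gauss_prod_residual I w S m"
    using weighted_quadratic_forms_complete_square[where I=I and w=w and P=P and
        M="matrix_inv \<Lambda>" and m=m and x=x] P_sym
    by (simp add: z_def \<Lambda>_def gauss_prod_residual_def gauss_prod_info_def gauss_prod_precision_def P_def)
  then show ?thesis
    by (simp add: prod_gauss_powr[where S=S, OF assms(3) det_pos] P_def[symmetric] algebra_simps
        flip: exp_add)
qed

lemma integral_prod_gauss_powr:
  fixes S :: "'k \<Rightarrow> real^'m^'m"
  assumes "finite I" and "\<And>k. k \<in> I \<Longrightarrow> sym_pos_def (S k)"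
    and "pos_def (gauss_prod_precision I w S)"
  obtains K where "0 < K"
    and "\<And>m. (LINT x|lborel. (\<Prod>k\<in>I. gauss x (m k) (S k) powr w k))
          = K * exp (- (1/2) * gauss_prod_residual I w S m)"
proof -
  define \<Lambda> where "\<Lambda> = gauss_prod_precision I w S"
  define C where "C = (\<Prod>k\<in>I. sqrt ((2 * pi) ^ CARD('m) * det (S k)) powr (- w k))"
  define I0 where "I0 = (LINT x|lborel. exp (- (1/2) * (x \<bullet> (\<Lambda> *v x))))"
  have "0 < C"
    using assms(2) pos_def_det_pos by (force simp: C_def sym_pos_def_def intro!: prod_pos)
  then have "0 < C * I0"
    using integral_exp_quadratic_form_pos[OF assms(3)] by (simp add: I0_def \<Lambda>_def)
  moreover have "(LINT x|lborel. (\<Prod>k\<in>I. gauss x (m k) (S k) powr w k))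
      = C * I0 * exp (- (1/2) * gauss_prod_residual I w S m)" for m
  proof -
    let ?z = "matrix_inv \<Lambda> *v gauss_prod_info I w S m"
    have "(LINT x|lborel. (\<Prod>k\<in>I. gauss x (m k) (S k) powr w k))
        = C * exp (- (1/2) * gauss_prod_residual I w S m)
          * (LINT x|lborel. exp (- (1/2) * ((x - ?z) \<bullet> (\<Lambda> *v (x - ?z)))))"
      using prod_gauss_powr_canonical[OF assms(1,2) pos_def_invertible[OF assms(3)]]
      by (simp add: C_def \<Lambda>_def)
    also have "(LINT x|lborel. exp (- (1/2) * ((x - ?z) \<bullet> (\<Lambda> *v (x - ?z))))) = I0"
      unfolding I0_def
      by (rule lborel_integral_translate[OF borel_measurable_exp_quadratic_form])
    finally show ?thesis by simp
  qed
  ultimately show ?thesis using that by blast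
qed

lemma has_derivative_quadratic_form:
  fixes A :: "real^'m^'m"
  assumes "transpose A = A" and "(f has_derivative f') (at t within s)"
  shows "((\<lambda>u. f u \<bullet> (A *v f u)) has_derivative (\<lambda>h. 2 * ((A *v f t) \<bullet> f' h))) (at t within s)"
proof (rule has_derivative_eq_rhs)
  show "((\<lambda>u. f u \<bullet> (A *v f u)) has_derivative (\<lambda>h. f t \<bullet> (A *v f' h) + f' h \<bullet> (A *v f t)))
      (at t within s)"
    using assms(2) bounded_linear.has_derivative[OF matrix_vector_mul_bounded_linear assms(2)]
    by (rule has_derivative_inner)
  show "(\<lambda>h. f t \<bullet> (A *v f' h) + f' h \<bullet> (A *v f t)) = (\<lambda>h. 2 * ((A *v f t) \<bullet> f' h))"
    using symmetric_matrix_inner[OF assms(1)] by (simp add: fun_eq_iff inner_commute)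
qed

lemma gauss_prod_precision_symmetric:
  assumes "\<And>k. k \<in> I \<Longrightarrow> sym_pos_def (S k)"
  shows "transpose (gauss_prod_precision I w S) = gauss_prod_precision I w S"
  unfolding gauss_prod_precision_def transpose_sum_scaleR
  by (intro sum.cong refl) (simp add: assms sym_pos_def_matrix_inv(1))

lemma has_derivative_gauss_prod_info:
  fixes S :: "'k \<Rightarrow> real^'m^'m" and \<mu> :: "'k \<Rightarrow> real^'m \<Rightarrow> real^'m"
  assumes "sum w I = 1" and "\<And>k. k \<in> I \<Longrightarrow> sym_pos_def (S k)"
    and "\<And>k. k \<in> I \<Longrightarrow> (\<mu> k has_derivative (\<lambda>h. \<beta> *\<^sub>R (S k *v h))) (at \<theta>)"
  shows "((\<lambda>u. gauss_prod_info I w S (\<lambda>k. \<mu> k u)) has_derivative (\<lambda>h. \<beta> *\<^sub>R h)) (at \<theta>)"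
proof -
  \<comment> \<open>each precision-weighted mean moves with velocity \<open>\<beta>\<close>, because \<open>S k\<inverse>\<close> undoes the Jacobian \<open>\<beta> S k\<close>\<close>
  have "((\<lambda>u. matrix_inv (S k) *v \<mu> k u) has_derivative (\<lambda>h. \<beta> *\<^sub>R h)) (at \<theta>)" if "k \<in> I" for k
    using bounded_linear.has_derivative[OF matrix_vector_mul_bounded_linear[of "matrix_inv (S k)"]
        assms(3)[OF that]] sym_pos_def_matrix_inv(3)[OF assms(2)[OF that]]
    by (simp add: matrix_vector_mul_assoc matrix_vector_mult_scaleR)
  then have "((\<lambda>u. gauss_prod_info I w S (\<lambda>k. \<mu> k u)) has_derivative
      (\<lambda>h. (\<Sum>k\<in>I. w k) *\<^sub>R \<beta> *\<^sub>R h)) (at \<theta>)"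
    unfolding gauss_prod_info_def scaleR_sum_left
    by (intro has_derivative_sum has_derivative_scaleR_right)
  then show ?thesis using assms(1) by simp
qed

lemma has_derivative_gauss_prod_residual:
  fixes S :: "'k \<Rightarrow> real^'m^'m" and \<mu> :: "'k \<Rightarrow> real^'m \<Rightarrow> real^'m"
  assumes "sum w I = 1" and "\<And>k. k \<in> I \<Longrightarrow> sym_pos_def (S k)"
    and "pos_def (gauss_prod_precision I w S)"
    and "\<And>k. k \<in> I \<Longrightarrow> (\<mu> k has_derivative (\<lambda>h. \<beta> *\<^sub>R (S k *v h))) (at \<theta>)"
  shows "((\<lambda>u. gauss_prod_residual I w S (\<lambda>k. \<mu> k u)) has_derivative
          (\<lambda>h. (2 * \<beta>) * (((\<Sum>k\<in>I. w k *\<^sub>R \<mu> k \<theta>)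
             - matrix_inv (gauss_prod_precision I w S) *v gauss_prod_info I w S (\<lambda>k. \<mu> k \<theta>)) \<bullet> h)))
         (at \<theta>)"
proof -
  define P where "P k = matrix_inv (S k)" for k
  define M where "M = matrix_inv (gauss_prod_precision I w S)"
  define b where "b u = gauss_prod_info I w S (\<lambda>k. \<mu> k u)" for u
  have M_sym: "transpose M = M"
    unfolding M_def
    using gauss_prod_precision_symmetric[OF assms(2)] pos_def_invertible[OF assms(3)]
    by (rule transpose_matrix_inv_symmetric[rotated])
  have "(b has_derivative (\<lambda>h. \<beta> *\<^sub>R h)) (at \<theta>)"
    unfolding b_def using assms(1,2,4) by (rule has_derivative_gauss_prod_info)
  then have db: "((\<lambda>u. b u \<bullet> (M *v b u)) has_derivative (\<lambda>h. 2 * ((M *v b \<theta>) \<bullet> (\<beta> *\<^sub>R h)))) (at \<theta>)"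
    by (rule has_derivative_quadratic_form[OF M_sym])
  have "((\<lambda>u. \<mu> k u \<bullet> (P k *v \<mu> k u)) has_derivative (\<lambda>h. (2 * \<beta>) * (\<mu> k \<theta> \<bullet> h))) (at \<theta>)"
    if "k \<in> I" for k
  proof (rule has_derivative_eq_rhs[OF has_derivative_quadratic_form[OF _ assms(4)[OF that]]])
    show "transpose (P k) = P k"
      unfolding P_def by (rule sym_pos_def_matrix_inv(1)[OF assms(2)[OF that]])
    have "transpose (S k) = S k" using assms(2)[OF that] by (simp add: sym_pos_def_def)
    then have "(P k *v \<mu> k \<theta>) \<bullet> (S k *v h) = \<mu> k \<theta> \<bullet> h" for h
      using symmetric_matrix_inner[of "S k" "P k *v \<mu> k \<theta>" h]
        sym_pos_def_matrix_inv(2)[OF assms(2)[OF that]]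
      by (simp add: inner_commute matrix_vector_mul_assoc P_def)
    then show "(\<lambda>h. 2 * ((P k *v \<mu> k \<theta>) \<bullet> (\<beta> *\<^sub>R (S k *v h)))) = (\<lambda>h. (2 * \<beta>) * (\<mu> k \<theta> \<bullet> h))"
      by (simp add: fun_eq_iff)
  qed
  then have "((\<lambda>u. \<Sum>k\<in>I. w k * (\<mu> k u \<bullet> (P k *v \<mu> k u))) has_derivative
      (\<lambda>h. \<Sum>k\<in>I. w k * ((2 * \<beta>) * (\<mu> k \<theta> \<bullet> h)))) (at \<theta>)"
    by (intro has_derivative_sum has_derivative_mult_right)
  from has_derivative_diff[OF this db] show ?thesis
    unfolding gauss_prod_residual_def b_def[symmetric] M_def[symmetric] P_def[symmetric]
    by (rule has_derivative_eq_rhs)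
      (simp add: fun_eq_iff inner_sum_left sum_distrib_left algebra_simps)
qed

lemma grad_eqI:
  assumes "(f has_derivative (\<lambda>h. v \<bullet> h)) (at x)"
  shows "grad f x = v"
  using frechet_derivative_at[OF assms, symmetric] by (simp add: grad_def inner_axis vec_eq_iff)

lemma grad_ln_integral_prod_gauss_powr:
  fixes S :: "'k \<Rightarrow> real^'m^'m" and \<mu> :: "'k \<Rightarrow> real^'m \<Rightarrow> real^'m"
  assumes "finite I" and "sum w I = 1" and "\<And>k. k \<in> I \<Longrightarrow> sym_pos_def (S k)"
    and "pos_def (gauss_prod_precision I w S)"
    and "\<And>k. k \<in> I \<Longrightarrow> (\<mu> k has_derivative (\<lambda>h. \<beta> *\<^sub>R (S k *v h))) (at \<theta>)"
  shows "grad (\<lambda>u. ln (LINT x|lborel. (\<Prod>k\<in>I. gauss x (\<mu> k u) (S k) powr w k))) \<theta>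
       = \<beta> *\<^sub>R (matrix_inv (gauss_prod_precision I w S) *v gauss_prod_info I w S (\<lambda>k. \<mu> k \<theta>)
                 - (\<Sum>k\<in>I. w k *\<^sub>R \<mu> k \<theta>))"
proof -
  let ?v = "\<beta> *\<^sub>R (matrix_inv (gauss_prod_precision I w S) *v gauss_prod_info I w S (\<lambda>k. \<mu> k \<theta>)
                 - (\<Sum>k\<in>I. w k *\<^sub>R \<mu> k \<theta>))"
  obtain K where "0 < K" and "\<And>m. (LINT x|lborel. (\<Prod>k\<in>I. gauss x (m k) (S k) powr w k))
      = K * exp (- (1/2) * gauss_prod_residual I w S m)"
    using integral_prod_gauss_powr[OF assms(1,3,4)] by blast
  then have ln_integral: "(\<lambda>u. ln (LINT x|lborel. (\<Prod>k\<in>I. gauss x (\<mu> k u) (S k) powr w k)))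
      = (\<lambda>u. ln K - (1/2) * gauss_prod_residual I w S (\<lambda>k. \<mu> k u))"
    by (simp add: fun_eq_iff ln_mult)
  have "((\<lambda>u. gauss_prod_residual I w S (\<lambda>k. \<mu> k u)) has_derivative
      (\<lambda>h. (2 * \<beta>) * (((\<Sum>k\<in>I. w k *\<^sub>R \<mu> k \<theta>)
         - matrix_inv (gauss_prod_precision I w S) *v gauss_prod_info I w S (\<lambda>k. \<mu> k \<theta>)) \<bullet> h)))
      (at \<theta>)"
    by (rule has_derivative_gauss_prod_residual) (simp_all add: assms)
  then have "((\<lambda>u. ln K - (1/2) * gauss_prod_residual I w S (\<lambda>k. \<mu> k u)) has_derivative
      (\<lambda>h. ?v \<bullet> h)) (at \<theta>)"
    by (auto intro!: derivative_eq_intros simp: fun_eq_iff inner_diff_left inner_diff_right field_simps)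
  then show ?thesis
    unfolding ln_integral by (rule grad_eqI)
qed

section \<open>Tweedie moments with constant covariance\<close>

lemma tw_mean_differentiable:
  assumes "C2 q" and "\<And>x. 0 < q x"
  shows "tw_mean \<alpha> q differentiable (at \<theta>)"
proof -
  obtain f' f'' where f': "\<And>x. (q has_derivative blinfun_apply (f' x)) (at x)"
    and f'': "\<And>x. (f' has_derivative blinfun_apply (f'' x)) (at x)"
    using assms(1) unfolding C2_def by blast
  have ln_q: "((\<lambda>u. ln (q u)) has_derivative (\<lambda>h. blinfun_apply (f' x) h / q x)) (at x)" for x
    using f' assms(2) by (auto intro!: derivative_eq_intros simp: field_simps)
  have score: "grad (\<lambda>u. ln (q u)) = (\<lambda>x. \<chi> i. blinfun_apply (f' x) (axis i 1) / q x)"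
    using frechet_derivative_at[OF ln_q] by (simp add: fun_eq_iff grad_def)
  have "(\<lambda>x. blinfun_apply (f' x) (axis i 1)) differentiable (at \<theta>)" for i
    using blinfun.FDERIV[OF f'' has_derivative_const] by (rule differentiableI)
  moreover have "q differentiable (at \<theta>)" and "q \<theta> \<noteq> 0"
    using f' assms(2)[of \<theta>] by (auto intro: differentiableI)
  ultimately have "(\<lambda>x. blinfun_apply (f' x) (axis i 1) / q x) differentiable (at \<theta>)" for i
    by (intro differentiable_divide)
  moreover have "grad (\<lambda>u. ln (q u))
      = (\<lambda>x. \<Sum>i\<in>UNIV. (blinfun_apply (f' x) (axis i 1) / q x) *\<^sub>R axis i (1::real))"
    by (simp add: score fun_eq_iff vec_eq_iff axis_def if_distrib cong: if_cong)
  ultimately have "grad (\<lambda>u. ln (q u)) differentiable (at \<theta>)"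
    by simp
  then show ?thesis
    unfolding tw_mean_def
    by (intro differentiable_scaleR differentiable_add differentiable_const differentiable_ident)
qed

lemma tw_mean_has_derivative:
  assumes "C2 q" and "\<And>x. 0 < q x" and "0 < \<alpha>" and "\<alpha> < 1"
  shows "(tw_mean \<alpha> q has_derivative (\<lambda>h. (sqrt \<alpha> / (1 - \<alpha>)) *\<^sub>R (tw_cov \<alpha> q \<theta> *v h))) (at \<theta>)"
proof -
  have "(tw_mean \<alpha> q has_derivative (*v) (jacobian (tw_mean \<alpha> q) (at \<theta>))) (at \<theta>)"
    using jacobian_works tw_mean_differentiable[OF assms(1,2)] by blast
  moreover have "jacobian (tw_mean \<alpha> q) (at \<theta>) = (sqrt \<alpha> / (1 - \<alpha>)) *\<^sub>R tw_cov \<alpha> q \<theta>"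
    using assms(3,4) by (simp add: tw_cov_def)
  ultimately show ?thesis by (simp add: scaleR_matrix_vector_assoc)
qed

lemma gauss_prod_info_affine:
  "gauss_prod_info I w S (\<lambda>k. c *\<^sub>R (x + d *\<^sub>R v k))
     = c *\<^sub>R (gauss_prod_precision I w S *v x + d *\<^sub>R gauss_prod_info I w S v)"
  by (simp add: gauss_prod_info_def gauss_prod_precision_def matrix_vector_mult_sum_left
      scaleR_sum_right sum.distrib scaleR_matrix_vector_assoc[symmetric] algebra_simps)

lemma grad_ln_integral_prod_tweedie_gauss:
  fixes \<alpha> :: real and \<theta> :: "real^'m" and q :: "'k \<Rightarrow> real^'m \<Rightarrow> real"
  defines "S \<equiv> \<lambda>k. tw_cov \<alpha> (q k) \<theta>"
    and "g \<equiv> \<lambda>k. grad (\<lambda>u. ln (q k u)) \<theta>"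
  assumes "0 < \<alpha>" and "\<alpha> < 1" and "finite I" and "sum w I = 1"
    and "\<And>k. k \<in> I \<Longrightarrow> C2 (q k)" and "\<And>k x. k \<in> I \<Longrightarrow> 0 < q k x"
    and "\<And>k. k \<in> I \<Longrightarrow> sym_pos_def (S k)"
    and "\<And>k u. k \<in> I \<Longrightarrow> (tw_cov \<alpha> (q k) has_derivative (\<lambda>_. 0)) (at u)"
    and "pos_def (gauss_prod_precision I w S)"
  shows "grad (\<lambda>u. ln (LINT x|lborel.
            (\<Prod>k\<in>I. gauss x (tw_mean \<alpha> (q k) u) (tw_cov \<alpha> (q k) u) powr w k))) \<theta>
       = matrix_inv (gauss_prod_precision I w S) *v gauss_prod_info I w S g - (\<Sum>k\<in>I. w k *\<^sub>R g k)"
proof -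
  define \<beta> where "\<beta> = sqrt \<alpha> / (1 - \<alpha>)"
  define M where "M = matrix_inv (gauss_prod_precision I w S)"
  have mean: "tw_mean \<alpha> (q k) \<theta> = (1 / sqrt \<alpha>) *\<^sub>R (\<theta> + (1 - \<alpha>) *\<^sub>R g k)" for k
    by (simp add: tw_mean_def g_def)
  have "tw_cov \<alpha> (q k) u = S k" if "k \<in> I" for k u
    using has_derivative_zero_constant[of UNIV "tw_cov \<alpha> (q k)"] assms(10)[OF that]
    by (auto simp: S_def)
  then have "grad (\<lambda>u. ln (LINT x|lborel.
            (\<Prod>k\<in>I. gauss x (tw_mean \<alpha> (q k) u) (tw_cov \<alpha> (q k) u) powr w k))) \<theta>
      = grad (\<lambda>u. ln (LINT x|lborel. (\<Prod>k\<in>I. gauss x (tw_mean \<alpha> (q k) u) (S k) powr w k))) \<theta>"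
    by (simp cong: prod.cong)
  also have "\<dots> = \<beta> *\<^sub>R (M *v gauss_prod_info I w S (\<lambda>k. tw_mean \<alpha> (q k) \<theta>)
                        - (\<Sum>k\<in>I. w k *\<^sub>R tw_mean \<alpha> (q k) \<theta>))"
    unfolding M_def
  proof (rule grad_ln_integral_prod_gauss_powr)
    show "(tw_mean \<alpha> (q k) has_derivative (\<lambda>h. \<beta> *\<^sub>R (S k *v h))) (at \<theta>)" if "k \<in> I" for k
      using tw_mean_has_derivative[OF assms(7,8)[OF that] assms(3,4)] by (simp add: \<beta>_def S_def)
  qed (use assms(5,6,9,11) in auto)
  also have "\<dots> = (\<beta> / sqrt \<alpha> * (1 - \<alpha>)) *\<^sub>R (M *v gauss_prod_info I w S g - (\<Sum>k\<in>I. w k *\<^sub>R g k))"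
  proof -
    have "M ** gauss_prod_precision I w S = mat 1"
      unfolding M_def by (rule matrix_inv_left[OF pos_def_invertible[OF assms(11)]])
    then have "M *v gauss_prod_info I w S (\<lambda>k. tw_mean \<alpha> (q k) \<theta>)
        = (1 / sqrt \<alpha>) *\<^sub>R (\<theta> + (1 - \<alpha>) *\<^sub>R (M *v gauss_prod_info I w S g))"
      unfolding mean gauss_prod_info_affine
      by (simp add: matrix_vector_mult_scaleR matrix_vector_right_distrib matrix_vector_mul_assoc)
    moreover have "(\<Sum>k\<in>I. w k *\<^sub>R tw_mean \<alpha> (q k) \<theta>)
        = (1 / sqrt \<alpha>) *\<^sub>R (\<theta> + (1 - \<alpha>) *\<^sub>R (\<Sum>k\<in>I. w k *\<^sub>R g k))"
      using assms(6)
      by (simp add: mean scaleR_sum_right sum.distrib scaleR_right_distrib scaleR_sum_left[symmetric]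
          sum_divide_distrib[symmetric] mult.commute)
    ultimately show ?thesis by (simp add: scaleR_add_right scaleR_diff_right)
  qed
  also have "\<dots> = M *v gauss_prod_info I w S g - (\<Sum>k\<in>I. w k *\<^sub>R g k)"
    using assms(3,4) by (simp add: \<beta>_def)
  finally show ?thesis by (simp add: M_def)
qed

section \<open>The tall-data score\<close>

definition tall_density :: "(real^'m \<Rightarrow> real) \<Rightarrow> (nat \<Rightarrow> real^'m \<Rightarrow> real) \<Rightarrow> nat \<Rightarrow> real^'m \<Rightarrow> real"
  where "tall_density pl p k = (if k = 0 then pl else p k)"

definition tall_weight :: "nat \<Rightarrow> nat \<Rightarrow> real"
  where "tall_weight n k = (if k = 0 then 1 - real n else 1)"

lemma sum_tall_weight:
  fixes f :: "nat \<Rightarrow> 'a::real_vector"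
  shows "(\<Sum>k\<in>{0..n}. tall_weight n k *\<^sub>R f k) = (1 - real n) *\<^sub>R f 0 + (\<Sum>j\<in>{1..n}. f j)"
  by (simp add: tall_weight_def sum.atLeast_Suc_atMost)

lemma sum_tall_weight_eq_1: "(\<Sum>k\<in>{0..n}. tall_weight n k) = 1"
  using sum_tall_weight[of n "\<lambda>_. 1::real"] by simp

lemma Lam_eq_gauss_prod_precision:
  "Lam \<alpha> pl p n \<theta> = gauss_prod_precision {0..n} (tall_weight n) (\<lambda>k. tw_cov \<alpha> (tall_density pl p k) \<theta>)"
  by (simp add: gauss_prod_precision_def Lam_def sum_tall_weight tall_density_def add.commute)

lemma Lhat_eq_integral_prod_gauss_powr:
  assumes "\<forall>j\<in>{1..n}. \<forall>\<theta>. sym_pos_def (tw_cov \<alpha> (p j) \<theta>)"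
  shows "Lhat \<alpha> pl p n = (\<lambda>u. LINT x|lborel. (\<Prod>k\<in>{0..n}.
           gauss x (tw_mean \<alpha> (tall_density pl p k) u) (tw_cov \<alpha> (tall_density pl p k) u)
             powr tall_weight n k))"
proof -
  \<comment> \<open>\<open>y powr 1 = \<bar>y\<bar>\<close>, so the factors with weight 1 must be shown positive\<close>
  have "0 < gauss x \<mu> (tw_cov \<alpha> (p j) u)" if "j \<in> {1..n}" for j x \<mu> u
    using assms that by (intro gauss_pos pos_def_det_pos) (simp add: sym_pos_def_def)
  then show ?thesis
    by (auto simp: fun_eq_iff Lhat_def tall_weight_def tall_density_def prod.atLeast_Suc_atMost
        abs_of_pos intro!: Bochner_Integration.integral_cong prod.cong)
qed

theorem lemma2:
  fixes \<alpha> :: real and n :: nat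
    and pl :: "real^'m \<Rightarrow> real" and p :: "nat \<Rightarrow> real^'m \<Rightarrow> real"
  assumes "0 < \<alpha>" and "\<alpha> < 1" and "1 \<le> n"
    and "prob_density pl" and "\<forall>x. 0 < pl x" and "C2 pl"
    and "\<forall>j\<in>{1..n}. prob_density (p j) \<and> (\<forall>x. 0 < p j x) \<and> C2 (p j)"
    and "\<forall>\<theta>. sym_pos_def (tw_cov \<alpha> pl \<theta>)"
    and "\<forall>j\<in>{1..n}. \<forall>\<theta>. sym_pos_def (tw_cov \<alpha> (p j) \<theta>)"
    and "\<forall>\<theta>. pos_def (Lam \<alpha> pl p n \<theta>)"
    and "\<forall>j\<in>{1..n}. \<forall>\<theta>. (tw_cov \<alpha> (p j) has_derivative (\<lambda>_. 0)) (at \<theta>)"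
    and "\<forall>\<theta>. (tw_cov \<alpha> pl has_derivative (\<lambda>_. 0)) (at \<theta>)"
  shows "\<forall>\<theta>. shat \<alpha> pl p n \<theta> =
           matrix_inv (Lam \<alpha> pl p n \<theta>) *v
             ((\<Sum>j\<in>{1..n}. matrix_inv (tw_cov \<alpha> (p j) \<theta>) *v grad (\<lambda>u. ln (p j u)) \<theta>)
              + (1 - real n) *\<^sub>R (matrix_inv (tw_cov \<alpha> pl \<theta>) *v grad (\<lambda>u. ln (pl u)) \<theta>))"
proof
  fix \<theta> :: "real^'m"
  let ?q = "tall_density pl p" and ?w = "tall_weight n"
  have q: "C2 (?q k)" "\<And>x. 0 < ?q k x" "\<And>u. sym_pos_def (tw_cov \<alpha> (?q k) u)"
    "\<And>u. (tw_cov \<alpha> (?q k) has_derivative (\<lambda>_. 0)) (at u)" if "k \<in> {0..n}" for k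
    using assms that by (auto simp: tall_density_def)
  have "grad (\<lambda>u. ln (Lhat \<alpha> pl p n u)) \<theta>
      = matrix_inv (Lam \<alpha> pl p n \<theta>) *v
          gauss_prod_info {0..n} ?w (\<lambda>k. tw_cov \<alpha> (?q k) \<theta>) (\<lambda>k. grad (\<lambda>u. ln (?q k u)) \<theta>)
        - (\<Sum>k\<in>{0..n}. ?w k *\<^sub>R grad (\<lambda>u. ln (?q k u)) \<theta>)"
    unfolding Lhat_eq_integral_prod_gauss_powr[OF assms(9)] Lam_eq_gauss_prod_precision
    using assms(10) q
    by (intro grad_ln_integral_prod_tweedie_gauss)
      (simp_all add: assms(1,2) sum_tall_weight_eq_1 Lam_eq_gauss_prod_precision)
  then show "shat \<alpha> pl p n \<theta> = matrix_inv (Lam \<alpha> pl p n \<theta>) *v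
             ((\<Sum>j\<in>{1..n}. matrix_inv (tw_cov \<alpha> (p j) \<theta>) *v grad (\<lambda>u. ln (p j u)) \<theta>)
              + (1 - real n) *\<^sub>R (matrix_inv (tw_cov \<alpha> pl \<theta>) *v grad (\<lambda>u. ln (pl u)) \<theta>))"
    by (simp add: shat_def gauss_prod_info_def sum_tall_weight tall_density_def add.commute)
qed

end
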